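(* For every ordered graph $H$ and every $\varepsilon>0$ there exists $C\in\mathbb{N}$ such that for all $d\in\mathbb{N}$ and all subsets $\mathcal{L}\subseteq[d]$ with $|\mathcal{L}|\ge C$, there exists a random variable $\Phi$ taking values in the set of embeddings of $H$ into the complete ordered graph $K$ on $\{0,1\}^d$ with the following property. For all but at most $\varepsilon|\mathcal{L}|$ levels $\ell\in\mathcal{L}$, all but at most an $\varepsilon$-proportion of the pairs $\{x,y\}\subseteq\{0,1\}^d$ with $\delta(x,y)=\ell$ satisfy \[ \mathbb{P}(xy\in\Phi(H))\ge(1-\varepsilon)\frac{e(H)}{|\mathcal{L}|\,\tau_{\ell,d}}. \]
   Context: An ordered graph is a graph with a totally ordered vertex set. An embedding of an ordered graph $H$ into an ordered graph $K$ is an injective order-preserving map $V(H)\to V(K)$ sending edges to edges; $\Phi(H)$ denotes the image of $H$ (so $xy\in\Phi(H)$ means $xy$ is the image of an edge of $H$). For distinct $x,y\in\{0,1\}^d$, $\delta(x,y)=\min\{i:x_i\ne y_i\}$; $\{0,1\}^d$ is ordered lexicographically ($x<y$ iff $x_{\delta(x,y)}=0$). $\tau_{\ell,d}=2^{2d-\ell-1}$ is the number of pairs $\{x,y\}\subseteq\{0,1\}^d$ with $\delta(x,y)=\ell$. *)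

theory Defs
  imports "HOL-Probability.Probability_Mass_Function"
begin

text \<open>The cube {0,1}^d: boolean lists of length d (False = 0, True = 1).
  Coordinates are 1-based in the paper: coordinate i is list entry i-1.\<close>
definition cube :: "nat \<Rightarrow> bool list set" where
  "cube d = {xs. length xs = d}"

definition delta :: "bool list \<Rightarrow> bool list \<Rightarrow> nat" where
  "delta x y = Min {i \<in> {1..length x}. x ! (i - 1) \<noteq> y ! (i - 1)}"

definition lex_less :: "bool list \<Rightarrow> bool list \<Rightarrow> bool" where
  "lex_less x y \<longleftrightarrow> x \<noteq> y \<and> \<not> x ! (delta x y - 1)"

definition tau :: "nat \<Rightarrow> nat \<Rightarrow> nat" where
  "tau l d = 2 ^ (2 * d - l - 1)"

definition ordered_graph :: "'a::linorder set \<Rightarrow> 'a set set \<Rightarrow> bool" where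
  "ordered_graph V E \<longleftrightarrow> finite V \<and> E \<subseteq> {{u, v} | u v. u \<in> V \<and> v \<in> V \<and> u \<noteq> v}"

text \<open>Embeddings of (V,E) into the complete ordered graph K on {0,1}^d:
  order-preserving (hence injective) maps V \<rightarrow> {0,1}^d; edge preservation is
  automatic as K is complete.\<close>
definition embeddings :: "'a::linorder set \<Rightarrow> 'a set set \<Rightarrow> nat \<Rightarrow> ('a \<Rightarrow> bool list) set" where
  "embeddings V E d = {\<phi>. (\<forall>u\<in>V. \<phi> u \<in> cube d) \<and>
      (\<forall>u\<in>V. \<forall>v\<in>V. u < v \<longrightarrow> lex_less (\<phi> u) (\<phi> v))}"

definition image_graph :: "('a \<Rightarrow> bool list) \<Rightarrow> 'a set set \<Rightarrow> bool list set set" where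
  "image_graph \<phi> E = (\<lambda>e. \<phi> ` e) ` E"

definition pairs_at :: "nat \<Rightarrow> nat \<Rightarrow> bool list set set" where
  "pairs_at d l = {{x, y} | x y. x \<in> cube d \<and> y \<in> cube d \<and> x \<noteq> y \<and> delta x y = l}"

end

theory Submission
  imports Defs
begin

text \<open>Sort the levels of L and cut them into blocks of K consecutive levels. A random embedding
  picks a start block b and, for each vertex v_k of H but the last, a level in block b + k at
  which the images of v_k and of all later vertices split: the image of v_k has a 0 there, a 1
  at the split levels of the earlier vertices, and otherwise uniformly random bits, private to
  v_k after its split level and shared by all vertices before it. Then the edge v_i v_j is
  mapped onto a pair a < c at a level of block \<beta> only if b = \<beta> - i, the split levels of the
  vertices before v_j other than v_i hit 1s of c and that of v_j hits a 0 of c, and the random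
  bits agree with a and c. If the coordinates of c are nearly balanced in each block near \<beta>,
  about half of the K choices qualify in each of these blocks, which is exactly compensated by
  the shared bits that c leaves free at the split levels; this gives probability almost
  1 / (|L| \<tau>) per edge. A second moment bound on the sign sums of c shows that few points are
  unbalanced, and only the levels in the first n - 2 and in the last blocks are given up.\<close>

section \<open>Counting in the cube\<close>

lemma cube_eq_lists: "cube d = {xs. set xs \<subseteq> (UNIV::bool set) \<and> length xs = d}"
  by (auto simp: cube_def)

lemma finite_cube [simp]: "finite (cube d)"
  unfolding cube_eq_lists by (rule finite_lists_length_eq) simp

lemma card_cube: "card (cube d) = 2 ^ d"
  unfolding cube_eq_lists using card_lists_length_eq[of "UNIV :: bool set" d] by simp

lemma card_cube_coordinatewise:
  "card {x \<in> cube d. \<forall>p<d. x ! p \<in> F p} = (\<Prod>p<d. card (F p))"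
proof -
  have "bij_betw (\<lambda>x. restrict (\<lambda>p. x ! p) {..<d}) {x \<in> cube d. \<forall>p<d. x ! p \<in> F p} (PiE {..<d} F)"
    by (rule bij_betw_byWitness[where f'="\<lambda>f. map f [0..<d]"])
       (auto simp: cube_def PiE_def Pi_def extensional_def fun_eq_iff intro!: nth_equalityI)
  then show ?thesis by (simp add: bij_betw_same_card card_PiE)
qed

lemma card_cube_agree_on:
  assumes "A \<subseteq> {..<d}"
  shows "card {x \<in> cube d. \<forall>p\<in>A. x ! p = w ! p} = 2 ^ (d - card A)"
proof -
  have "{x \<in> cube d. \<forall>p\<in>A. x ! p = w ! p}
      = {x \<in> cube d. \<forall>p<d. x ! p \<in> (if p \<in> A then {w ! p} else UNIV)}"
    using assms by auto
  also have "card \<dots> = (\<Prod>p<d. if p \<in> A then 1 else 2)"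
    unfolding card_cube_coordinatewise by (rule prod.cong) auto
  also have "\<dots> = 2 ^ card ({..<d} - A)"
    by (simp add: prod.If_cases Diff_eq)
  finally show ?thesis
    using assms by (simp add: card_Diff_subset finite_subset)
qed

definition bit_sign :: "bool \<Rightarrow> real" where
  "bit_sign b = (if b then 1 else -1)"

lemma sum_cube_sign_mult:
  assumes "p \<noteq> q" "p < d" "q < d"
  shows "(\<Sum>x\<in>cube d. bit_sign (x ! p) * bit_sign (x ! q)) = 0"
proof -
  define flip where "flip x = x[p := \<not> x ! p]" for x :: "bool list"
  have "bij_betw flip (cube d) (cube d)"
    by (rule bij_betw_byWitness[where f'=flip]) (use assms in \<open>auto simp: flip_def cube_def\<close>)
  then have "(\<Sum>x\<in>cube d. bit_sign (x ! p) * bit_sign (x ! q))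
      = (\<Sum>x\<in>cube d. bit_sign (flip x ! p) * bit_sign (flip x ! q))"
    by (rule sum.reindex_bij_betw[symmetric])
  also have "\<dots> = (\<Sum>x\<in>cube d. - (bit_sign (x ! p) * bit_sign (x ! q)))"
    by (rule sum.cong) (use assms in \<open>auto simp: flip_def cube_def bit_sign_def\<close>)
  finally show ?thesis
    by (simp add: sum_negf)
qed

lemma sum_cube_sign_sum_square:
  assumes "inj_on f {..<K}" and "f ` {..<K} \<subseteq> {..<d}"
  shows "(\<Sum>x\<in>cube d. (\<Sum>g<K. bit_sign (x ! f g))\<^sup>2) = real K * 2 ^ d"
proof -
  have orth: "(\<Sum>x\<in>cube d. bit_sign (x ! f g) * bit_sign (x ! f g')) = (if g = g' then 2 ^ d else 0)"
    if "g < K" "g' < K" for g g'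
  proof (cases "g = g'")
    case True
    have "bit_sign b * bit_sign b = 1" for b by (simp add: bit_sign_def)
    with True show ?thesis by (simp add: card_cube)
  next
    case False
    with that assms have "f g \<noteq> f g'" "f g < d" "f g' < d"
      by (auto dest: inj_onD)
    with False show ?thesis by (simp add: sum_cube_sign_mult)
  qed
  have "(\<Sum>x\<in>cube d. (\<Sum>g<K. bit_sign (x ! f g))\<^sup>2)
      = (\<Sum>x\<in>cube d. \<Sum>g<K. \<Sum>g'<K. bit_sign (x ! f g) * bit_sign (x ! f g'))"
    by (simp add: power2_eq_square sum_product)
  also have "\<dots> = (\<Sum>g<K. \<Sum>x\<in>cube d. \<Sum>g'<K. bit_sign (x ! f g) * bit_sign (x ! f g'))"
    by (rule sum.swap)
  also have "\<dots> = (\<Sum>g<K. \<Sum>g'<K. \<Sum>x\<in>cube d. bit_sign (x ! f g) * bit_sign (x ! f g'))"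
    by (rule sum.cong[OF refl], rule sum.swap)
  also have "\<dots> = (\<Sum>g<K. \<Sum>g'<K. if g = g' then 2 ^ d else 0)"
    by (intro sum.cong refl) (simp add: orth)
  finally show ?thesis by simp
qed

lemma card_cube_unbalanced_le:
  assumes "inj_on f {..<K}" and "f ` {..<K} \<subseteq> {..<d}" and "t > 0"
  shows "real (card {x \<in> cube d. t < \<bar>\<Sum>g<K. bit_sign (x ! f g)\<bar>}) \<le> real K * 2 ^ d / t\<^sup>2"
proof -
  let ?B = "{x \<in> cube d. t < \<bar>\<Sum>g<K. bit_sign (x ! f g)\<bar>}"
  have "real (card ?B) * t\<^sup>2 = (\<Sum>x\<in>?B. t\<^sup>2)" by simp
  also have "\<dots> \<le> (\<Sum>x\<in>?B. (\<Sum>g<K. bit_sign (x ! f g))\<^sup>2)"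
  proof (rule sum_mono)
    fix x assume "x \<in> ?B"
    then have "t\<^sup>2 \<le> \<bar>\<Sum>g<K. bit_sign (x ! f g)\<bar>\<^sup>2"
      using \<open>t > 0\<close> by (intro power_mono) auto
    then show "t\<^sup>2 \<le> (\<Sum>g<K. bit_sign (x ! f g))\<^sup>2" by simp
  qed
  also have "\<dots> \<le> (\<Sum>x\<in>cube d. (\<Sum>g<K. bit_sign (x ! f g))\<^sup>2)"
    by (rule sum_mono2) auto
  also have "\<dots> = real K * 2 ^ d"
    by (rule sum_cube_sign_sum_square[OF assms(1,2)])
  finally show ?thesis
    using \<open>t > 0\<close> by (simp add: pos_le_divide_eq)
qed

lemma sign_sum_le_imp_card_ge:
  fixes F :: "nat \<Rightarrow> bool" and e :: real
  assumes "\<bar>\<Sum>g<K. bit_sign (F g)\<bar> \<le> e * K"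
  shows "(1 - e) * K \<le> 2 * real (card {g. g < K \<and> F g})"
    and "(1 - e) * K \<le> 2 * real (card {g. g < K \<and> \<not> F g})"
proof -
  have split: "{..<K} = {g. g < K \<and> F g} \<union> {g. g < K \<and> \<not> F g}" by auto
  have card_split: "card {g. g < K \<and> F g} + card {g. g < K \<and> \<not> F g} = card {..<K}"
    by (subst split, rule card_Un_disjoint[symmetric]) auto
  have "(\<Sum>g<K. bit_sign (F g)) = real (card {g. g < K \<and> F g}) - real (card {g. g < K \<and> \<not> F g})"
    by (subst split, subst sum.union_disjoint) (auto simp: bit_sign_def)
  moreover have "real (card {g. g < K \<and> F g}) + real (card {g. g < K \<and> \<not> F g}) = real K"
    using card_split by (metis card_lessThan of_nat_add)
  ultimately show "(1 - e) * K \<le> 2 * real (card {g. g < K \<and> F g})"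
    and "(1 - e) * K \<le> 2 * real (card {g. g < K \<and> \<not> F g})"
    using assms by (auto simp: algebra_simps abs_le_iff)
qed

lemma delta_eqI:
  assumes "x \<in> cube d" "q < d" "\<forall>p<q. x ! p = y ! p" "x ! q \<noteq> y ! q"
  shows "delta x y = q + 1"
  unfolding delta_def
proof (rule Min_eqI)
  fix z assume "z \<in> {i \<in> {1..length x}. x ! (i - 1) \<noteq> y ! (i - 1)}"
  then have "1 \<le> z" "x ! (z - 1) \<noteq> y ! (z - 1)" by auto
  with assms(3) show "q + 1 \<le> z"
    by (cases "z - 1 < q") auto
qed (use assms in \<open>auto simp: cube_def\<close>)

lemma lex_lessI:
  assumes "x \<in> cube d" "q < d" "\<forall>p<q. x ! p = y ! p" "\<not> x ! q" "y ! q"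
  shows "lex_less x y"
  using delta_eqI[OF assms(1-3)] assms(4,5) by (auto simp: lex_less_def)

lemma delta_first_difference:
  assumes "x \<in> cube d" "y \<in> cube d" "x \<noteq> y"
  shows "1 \<le> delta x y" "delta x y \<le> d" "x ! (delta x y - 1) \<noteq> y ! (delta x y - 1)"
    and "\<forall>p < delta x y - 1. x ! p = y ! p"
proof -
  let ?D = "{i \<in> {1..length x}. x ! (i - 1) \<noteq> y ! (i - 1)}"
  have len: "length x = d" "length y = d" using assms by (auto simp: cube_def)
  have "\<exists>p<d. x ! p \<noteq> y ! p"
  proof (rule ccontr)
    assume "\<not> (\<exists>p<d. x ! p \<noteq> y ! p)"
    then have "x = y" using len by (intro nth_equalityI) auto
    with assms(3) show False by simp
  qed
  then obtain p where "p < d" "x ! p \<noteq> y ! p" by blast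
  then have "p + 1 \<in> ?D" using len by auto
  then have "delta x y \<in> ?D"
    unfolding delta_def by (intro Min_in) auto
  then show "1 \<le> delta x y" "delta x y \<le> d" "x ! (delta x y - 1) \<noteq> y ! (delta x y - 1)"
    using len by auto
  show "\<forall>p < delta x y - 1. x ! p = y ! p"
  proof (intro allI impI)
    fix q assume q: "q < delta x y - 1"
    show "x ! q = y ! q"
    proof (rule ccontr)
      assume "x ! q \<noteq> y ! q"
      with q \<open>delta x y \<in> ?D\<close> len have "q + 1 \<in> ?D" by auto
      then have "delta x y \<le> q + 1" unfolding delta_def by (intro Min_le) auto
      with q show False by simp
    qed
  qed
qed

lemma delta_commute: "length x = length y \<Longrightarrow> delta x y = delta y x"
  unfolding delta_def by (metis (no_types, lifting))

lemma finite_pairs_at: "finite (pairs_at d l)"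
  by (rule finite_subset[of _ "Pow (cube d)"]) (auto simp: pairs_at_def)

text \<open>The partners of y at level l are the points that agree with y, flipped at coordinate
  l - 1, on the first l coordinates; there are 2 ^ (d - l) of them.\<close>
lemma card_pairs_at_meeting_le:
  assumes "1 \<le> l" "l \<le> d" and "B \<subseteq> cube d"
  shows "card {q \<in> pairs_at d l. \<exists>y\<in>q. y \<in> B} \<le> card B * 2 ^ (d - l)"
proof -
  define partners where
    "partners y = {x \<in> cube d. \<forall>p\<in>{..<l}. x ! p = (y[l - 1 := \<not> y ! (l - 1)]) ! p}" for y
  have finB: "finite B" using assms(3) by (rule finite_subset) simp
  have partner: "x \<in> partners y" if "x \<in> cube d" "y \<in> cube d" "x \<noteq> y" "delta x y = l" for x y
  proof -
    have "x ! (l - 1) \<noteq> y ! (l - 1)" "\<forall>p<l - 1. x ! p = y ! p"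
      using delta_first_difference[OF that(1-3)] that(4) by auto
    then show ?thesis
      using that assms(1,2) by (auto simp: partners_def cube_def nth_list_update)
  qed
  have "{q \<in> pairs_at d l. \<exists>y\<in>q. y \<in> B} \<subseteq> (\<lambda>(y, x). {x, y}) ` Sigma B partners"
  proof
    fix q assume "q \<in> {q \<in> pairs_at d l. \<exists>y\<in>q. y \<in> B}"
    then obtain x y where q: "q = {x, y}" "x \<in> cube d" "y \<in> cube d" "x \<noteq> y" "delta x y = l"
      and "x \<in> B \<or> y \<in> B"
      unfolding pairs_at_def by blast
    then consider "y \<in> B" "x \<in> partners y" | "x \<in> B" "y \<in> partners x"
      using partner delta_commute[of x y] by (auto simp: cube_def)
    then show "q \<in> (\<lambda>(y, x). {x, y}) ` Sigma B partners"
    proof cases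
      case 1
      then show ?thesis using q(1) by (auto intro!: image_eqI[of _ _ "(y, x)"])
    next
      case 2
      then show ?thesis using q(1) by (auto intro!: image_eqI[of _ _ "(x, y)"])
    qed
  qed
  moreover have fin: "finite (Sigma B partners)"
    using finB by (auto simp: partners_def)
  ultimately have "card {q \<in> pairs_at d l. \<exists>y\<in>q. y \<in> B}
      \<le> card ((\<lambda>(y, x). {x, y}) ` Sigma B partners)"
    by (intro card_mono) auto
  also have "\<dots> \<le> card (Sigma B partners)"
    using fin by (rule card_image_le)
  also have "\<dots> = (\<Sum>y\<in>B. card (partners y))"
    using finB by (intro card_SigmaI) (auto simp: partners_def)
  also have "\<dots> = card B * 2 ^ (d - l)"
    using assms by (simp add: partners_def card_cube_agree_on)
  finally show ?thesis .
qed

lemma prod_remove_three: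
  assumes "finite A" "x \<in> A" "y \<in> A" "z \<in> A" "x \<noteq> y" "x \<noteq> z" "y \<noteq> z"
  shows "prod f A = f x * f y * f z * prod f (A - {x, y, z})"
proof -
  have "prod f A = f x * prod f (A - {x})"
    using prod.remove[OF assms(1,2)] .
  also have "prod f (A - {x}) = f y * prod f (A - {x} - {y})"
    using prod.remove[of "A - {x}" y f] assms by auto
  also have "prod f (A - {x} - {y}) = f z * prod f (A - {x} - {y} - {z})"
    using prod.remove[of "A - {x} - {y}" z f] assms by auto
  also have "A - {x} - {y} - {z} = A - {x, y, z}" by auto
  finally show ?thesis by (simp add: mult.assoc)
qed

definition vertex_index :: "'a::linorder set \<Rightarrow> 'a \<Rightarrow> nat" where
  "vertex_index V w = card {u \<in> V. u < w}"

lemma vertex_index_less_card: "finite V \<Longrightarrow> w \<in> V \<Longrightarrow> vertex_index V w < card V"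
  unfolding vertex_index_def by (rule psubset_card_mono) auto

lemma vertex_index_strict_mono:
  "finite V \<Longrightarrow> u \<in> V \<Longrightarrow> w \<in> V \<Longrightarrow> u < w \<Longrightarrow> vertex_index V u < vertex_index V w"
  unfolding vertex_index_def by (rule psubset_card_mono) auto

lemma ordered_graph_edgeE:
  assumes "ordered_graph V E" "f \<in> E"
  obtains u w where "f = {u, w}" "u \<in> V" "w \<in> V" "u < w"
proof -
  obtain u w where "f = {u, w}" "u \<in> V" "w \<in> V" "u \<noteq> w"
    using assms unfolding ordered_graph_def by blast
  then show ?thesis
  proof (cases "u < w")
    case False
    with \<open>u \<noteq> w\<close> have "w < u" by simp
    with that[of w u] \<open>f = {u, w}\<close> \<open>u \<in> V\<close> \<open>w \<in> V\<close> show ?thesis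
      by (simp add: insert_commute)
  qed (use that in blast)
qed

lemma ordered_graph_finite_edges: "ordered_graph V E \<Longrightarrow> finite E"
  unfolding ordered_graph_def by (rule finite_subset[of _ "Pow V"]) auto

definition bad_pairs ::
    "('a \<Rightarrow> bool list) pmf \<Rightarrow> 'a set set \<Rightarrow> nat \<Rightarrow> nat set \<Rightarrow> real \<Rightarrow> nat \<Rightarrow> bool list set set"
where
  "bad_pairs \<Phi> E d L \<epsilon> l = {p \<in> pairs_at d l.
     \<not> (measure_pmf.prob \<Phi> {\<phi>. p \<in> image_graph \<phi> E}
          \<ge> (1 - \<epsilon>) * real (card E) / (real (card L) * real (tau l d)))}"

definition bad_levels ::
    "('a \<Rightarrow> bool list) pmf \<Rightarrow> 'a set set \<Rightarrow> nat \<Rightarrow> nat set \<Rightarrow> real \<Rightarrow> nat set"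
where
  "bad_levels \<Phi> E d L \<epsilon> = {l \<in> L. real (card (bad_pairs \<Phi> E d L \<epsilon> l)) > \<epsilon> * real (tau l d)}"

type_synonym sample = "nat \<times> (nat \<Rightarrow> nat) \<times> (nat \<Rightarrow> bool list)"

section \<open>The random embedding\<close>

text \<open>n is the number of vertices of H; the first NB blocks are the possible start blocks.\<close>
locale level_blocks =
  fixes L :: "nat set" and d K NB n :: nat
  assumes levels_subset: "L \<subseteq> {1..d}" and K_pos: "0 < K" and enough_levels: "(NB + n) * K \<le> card L"
begin

definition levels :: "nat list" where
  "levels = sorted_list_of_set L"

text \<open>The sorted levels are cut into consecutive blocks of K levels; coord \<beta> g is the
  coordinate (counted from 0, so level minus one) of the g-th level of block \<beta>.\<close>
definition coord :: "nat \<Rightarrow> nat \<Rightarrow> nat" where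
  "coord \<beta> g = levels ! (\<beta> * K + g) - 1"

text \<open>A sample (b, g, Y) maps the k-th vertex to a point that splits from all later ones at
  coordinate split_coord b g k, chosen as the g k-th level of block b + k (the last vertex
  needs no split coordinate; d serves as a sentinel). Its bits are: the free bits Y k after
  the split coordinate, 0 at it, 1 at the split coordinates of earlier vertices, and
  the bits Y n, common to all vertices, elsewhere.\<close>
definition split_coord :: "nat \<Rightarrow> (nat \<Rightarrow> nat) \<Rightarrow> nat \<Rightarrow> nat" where
  "split_coord b g k = (if k < n - 1 then coord (b + k) (g k) else d)"

definition vertex_bit :: "nat \<Rightarrow> (nat \<Rightarrow> nat) \<Rightarrow> (nat \<Rightarrow> bool list) \<Rightarrow> nat \<Rightarrow> nat \<Rightarrow> bool" where
  "vertex_bit b g Y k p =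
    (if split_coord b g k < p then Y k ! p
     else if p = split_coord b g k then False
     else if \<exists>u<n - 1. split_coord b g u = p then True
     else Y n ! p)"

definition vertex_image :: "sample \<Rightarrow> nat \<Rightarrow> bool list" where
  "vertex_image s k = (case s of (b, g, Y) \<Rightarrow> map (vertex_bit b g Y k) [0..<d])"

definition choices :: "(nat \<Rightarrow> nat) set" where
  "choices = PiE {..<n - 1} (\<lambda>_. {..<K})"

definition samples :: "sample set" where
  "samples = {..<NB} \<times> choices \<times> PiE {..<Suc n} (\<lambda>_. cube d)"

lemma finite_levels: "finite L"
  using levels_subset by (rule finite_subset) simp

lemma length_levels: "length levels = card L"
  by (simp add: levels_def finite_levels)

lemma levels_bounds:
  assumes "r < card L"
  shows "1 \<le> levels ! r" "levels ! r \<le> d"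
proof -
  have "levels ! r \<in> L"
    using assms length_levels finite_levels by (metis levels_def nth_mem set_sorted_list_of_set)
  then show "1 \<le> levels ! r" "levels ! r \<le> d"
    using levels_subset by auto
qed

lemma levels_strict_mono: "r < r' \<Longrightarrow> r' < card L \<Longrightarrow> levels ! r < levels ! r'"
  using sorted_wrt_nth_less[of "(<)" levels r r'] length_levels
  by (simp add: levels_def finite_levels)

lemma coord_less: "\<beta> * K + g < card L \<Longrightarrow> coord \<beta> g < d"
  using levels_bounds[of "\<beta> * K + g"] unfolding coord_def by auto

lemma coord_strict_mono:
  "\<beta> * K + g < \<beta>' * K + g' \<Longrightarrow> \<beta>' * K + g' < card L \<Longrightarrow> coord \<beta> g < coord \<beta>' g'"
  using levels_strict_mono[of "\<beta> * K + g" "\<beta>' * K + g'"] levels_bounds[of "\<beta> * K + g"]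
  unfolding coord_def by auto

lemma block_index_less:
  assumes "\<beta> < card L div K" "g < K"
  shows "\<beta> * K + g < card L"
proof -
  have "\<beta> * K + g < (\<beta> + 1) * K" using assms by simp
  also have "\<dots> \<le> card L div K * K" using assms by (intro mult_le_mono1) auto
  also have "\<dots> \<le> card L" by simp
  finally show ?thesis .
qed

lemma sample_block_less:
  assumes "b < NB" "k < n - 1"
  shows "b + k < card L div K"
proof -
  have "NB + n \<le> card L div K"
    using enough_levels K_pos by (simp add: less_eq_div_iff_mult_less_eq)
  with assms show ?thesis by linarith
qed

lemma block_index_strict_mono:
  assumes "k < k'" "g < K"
  shows "(b + k) * K + g < (b + k') * K + g'"
proof -
  have "(b + k) * K + g < (b + k + 1) * K" using assms by simp
  also have "\<dots> \<le> (b + k') * K" using assms by (intro mult_le_mono1) auto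
  finally show ?thesis by simp
qed

lemma coord_inj_on: "\<beta> < card L div K \<Longrightarrow> inj_on (coord \<beta>) {..<K}"
  by (rule inj_onI, rule ccontr)
     (metis block_index_less coord_strict_mono lessThan_iff linorder_neqE_nat nat_add_left_cancel_less
      less_irrefl)

lemma coord_image_subset: "\<beta> < card L div K \<Longrightarrow> coord \<beta> ` {..<K} \<subseteq> {..<d}"
  using block_index_less coord_less by auto

lemma choices_less: "g \<in> choices \<Longrightarrow> k < n - 1 \<Longrightarrow> g k < K"
  unfolding choices_def by auto

lemma split_coord_less:
  assumes "b < NB" "g \<in> choices" "k < n - 1"
  shows "split_coord b g k < d"
  using assms coord_less block_index_less sample_block_less choices_less by (simp add: split_coord_def)

lemma split_coord_le: "b < NB \<Longrightarrow> g \<in> choices \<Longrightarrow> split_coord b g k \<le> d"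
  using split_coord_less[of b g k] by (cases "k < n - 1") (auto simp: split_coord_def)

lemma split_coord_strict_mono:
  assumes "b < NB" "g \<in> choices" "k < k'" "k' < n"
  shows "split_coord b g k < split_coord b g k'"
proof (cases "k' < n - 1")
  case True
  with assms show ?thesis
    unfolding split_coord_def
    by (simp add: coord_strict_mono block_index_strict_mono choices_less block_index_less sample_block_less)
next
  case False
  with assms split_coord_less[of b g k] show ?thesis by (simp add: split_coord_def)
qed

lemma split_coord_less_iff:
  "b < NB \<Longrightarrow> g \<in> choices \<Longrightarrow> k < n \<Longrightarrow> k' < n \<Longrightarrow> split_coord b g k < split_coord b g k' \<longleftrightarrow> k < k'"
  using split_coord_strict_mono by (metis less_asym nat_neq_iff)

lemma split_coord_inj:
  "b < NB \<Longrightarrow> g \<in> choices \<Longrightarrow> k < n \<Longrightarrow> k' < n \<Longrightarrow> split_coord b g k = split_coord b g k' \<Longrightarrow> k = k'"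
  using split_coord_strict_mono by (metis less_irrefl nat_neq_iff)

lemma vertex_image_in_cube: "vertex_image s k \<in> cube d"
  by (cases s) (simp add: vertex_image_def cube_def)

lemma nth_vertex_image: "p < d \<Longrightarrow> vertex_image (b, g, Y) k ! p = vertex_bit b g Y k p"
  by (simp add: vertex_image_def)

lemma vertex_image_lex_less:
  assumes "(b, g, Y) \<in> samples" "u < v" "v < n"
  shows "lex_less (vertex_image (b, g, Y) u) (vertex_image (b, g, Y) v)"
proof (rule lex_lessI[OF vertex_image_in_cube])
  have bg: "b < NB" "g \<in> choices" using assms(1) by (auto simp: samples_def)
  then have uv: "split_coord b g u < split_coord b g v"
    using assms split_coord_strict_mono by simp
  show "split_coord b g u < d"
    using assms bg by (simp add: split_coord_less)
  then show "\<forall>p<split_coord b g u. vertex_image (b, g, Y) u ! p = vertex_image (b, g, Y) v ! p"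
    using uv by (auto simp: nth_vertex_image vertex_bit_def)
  show "\<not> vertex_image (b, g, Y) u ! split_coord b g u"
    using \<open>split_coord b g u < d\<close> by (simp add: nth_vertex_image vertex_bit_def)
  have "u < n - 1" using assms by simp
  then show "vertex_image (b, g, Y) v ! split_coord b g u"
    using \<open>split_coord b g u < d\<close> uv by (auto simp: nth_vertex_image vertex_bit_def)
qed

lemma finite_samples: "finite samples"
  unfolding samples_def choices_def by (intro finite_cartesian_product finite_PiE) auto

lemma card_samples: "card samples = NB * K ^ (n - 1) * (2 ^ d) ^ Suc n"
  by (simp add: samples_def choices_def card_cartesian_product card_PiE card_cube)

definition balanced :: "real \<Rightarrow> bool list \<Rightarrow> nat \<Rightarrow> bool" where
  "balanced e y \<beta> \<longleftrightarrow> \<bar>\<Sum>g<K. bit_sign (y ! coord \<beta> g)\<bar> \<le> e * K"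

lemma vertex_image_eqI:
  assumes "b < NB" "g \<in> choices" "k < n" "x \<in> cube d"
    and after: "\<forall>p\<in>{split_coord b g k<..<d}. Y k ! p = x ! p"
    and at: "split_coord b g k < d \<Longrightarrow> \<not> x ! split_coord b g k"
    and earlier: "\<forall>u<k. x ! split_coord b g u"
    and shared: "\<forall>p\<in>{..<split_coord b g k} - split_coord b g ` {..<n - 1}. Y n ! p = x ! p"
  shows "vertex_image (b, g, Y) k = x"
proof (rule nth_equalityI)
  show "length (vertex_image (b, g, Y) k) = length x"
    using vertex_image_in_cube assms(4) by (simp add: cube_def)
next
  fix p assume "p < length (vertex_image (b, g, Y) k)"
  then have p: "p < d" by (simp add: vertex_image_def)
  consider "split_coord b g k < p" | "p = split_coord b g k" | "p < split_coord b g k"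
    by linarith
  then show "vertex_image (b, g, Y) k ! p = x ! p"
  proof cases
    case 3
    have "u < k" if "u < n - 1" "split_coord b g u = p" for u
      using that 3 split_coord_less_iff[OF assms(1,2), of u k] assms(3) by simp
    with 3 p earlier shared show ?thesis
      by (auto simp: nth_vertex_image vertex_bit_def)
  qed (use p after at in \<open>auto simp: nth_vertex_image vertex_bit_def\<close>)
qed

text \<open>For a pair a < c splitting at coordinate P = coord (b + i) h, the samples with start
  block b that map vertex i to a and vertex j to c include the following fiber: vertex i
  splits at P; the vertices k < j other than i split at a 1 of c and vertex j at a 0 of c,
  as c is the image of the later vertex j; and all random bits that a or c can see are fixed.\<close>
context
  fixes b i j h P :: nat and a c :: "bool list"
  assumes b: "b < NB" and ij: "i < j" "j < n" and h: "h < K" and P_eq: "coord (b + i) h = P"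
    and ac: "a \<in> cube d" "c \<in> cube d" "\<forall>p<P. a ! p = c ! p" "\<not> a ! P" "c ! P"
begin

definition fiber_choices :: "nat \<Rightarrow> nat set" where
  "fiber_choices k =
    (if k = i then {h}
     else if k < j then {g. g < K \<and> c ! coord (b + k) g}
     else if k = j then {g. g < K \<and> \<not> c ! coord (b + k) g}
     else {..<K})"

definition lower_bits :: "bool list set" where
  "lower_bits = {y \<in> cube d. \<forall>p\<in>{P<..<d}. y ! p = a ! p}"

definition upper_bits :: "(nat \<Rightarrow> nat) \<Rightarrow> bool list set" where
  "upper_bits g = {y \<in> cube d. \<forall>p\<in>{split_coord b g j<..<d}. y ! p = c ! p}"

definition shared_bits :: "(nat \<Rightarrow> nat) \<Rightarrow> bool list set" where
  "shared_bits g = {y \<in> cube d. \<forall>p\<in>{..<split_coord b g j} - split_coord b g ` {..<n - 1}. y ! p = c ! p}"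

definition fiber_bits :: "(nat \<Rightarrow> nat) \<Rightarrow> (nat \<Rightarrow> bool list) set" where
  "fiber_bits g = PiE {..<Suc n}
     (\<lambda>v. if v = i then lower_bits else if v = j then upper_bits g
          else if v = n then shared_bits g else cube d)"

definition fiber :: "sample set" where
  "fiber = {b} \<times> Sigma (PiE {..<n - 1} fiber_choices) fiber_bits"

definition constrained :: "nat set" where
  "constrained = {k. k < n - 1 \<and> k \<noteq> i \<and> k \<le> j}"

lemma i_less: "i < n - 1"
  using ij by simp

lemma P_less: "P < d"
  using coord_less[OF block_index_less[OF sample_block_less[OF b i_less] h]] P_eq by simp

lemma fiber_choices_subset_choices: "PiE {..<n - 1} fiber_choices \<subseteq> choices"
proof -
  have "fiber_choices k \<subseteq> {..<K}" for k
    using h by (auto simp: fiber_choices_def)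
  then show ?thesis
    by (auto simp: choices_def PiE_def Pi_def)
qed

lemma fiber_split_coords:
  assumes "g \<in> PiE {..<n - 1} fiber_choices"
  shows "split_coord b g i = P"
    and "k < j \<Longrightarrow> c ! split_coord b g k"
    and "j < n - 1 \<Longrightarrow> \<not> c ! split_coord b g j"
proof -
  have g: "k < n - 1 \<Longrightarrow> g k \<in> fiber_choices k" for k
    using assms by auto
  show Pi: "split_coord b g i = P"
    using g[OF i_less] i_less P_eq by (simp add: split_coord_def fiber_choices_def)
  show "k < j \<Longrightarrow> c ! split_coord b g k"
    using g[of k] ij Pi ac(5) by (cases "k = i") (auto simp: split_coord_def fiber_choices_def)
  show "j < n - 1 \<Longrightarrow> \<not> c ! split_coord b g j"
    using g[of j] ij by (simp add: split_coord_def fiber_choices_def)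
qed

lemma vertex_images_fiber:
  assumes "s \<in> fiber"
  shows "vertex_image s i = a" and "vertex_image s j = c"
proof -
  obtain g Y where s: "s = (b, g, Y)" and g: "g \<in> PiE {..<n - 1} fiber_choices"
    and Y: "Y \<in> fiber_bits g"
    using assms by (auto simp: fiber_def)
  have gc: "g \<in> choices" using g fiber_choices_subset_choices by blast
  have Yv: "Y v \<in> (if v = i then lower_bits else if v = j then upper_bits g
                else if v = n then shared_bits g else cube d)" if "v < Suc n" for v
    using PiE_mem[OF Y[unfolded fiber_bits_def], of v] that by simp
  have "Y i \<in> lower_bits" "Y j \<in> upper_bits g" "Y n \<in> shared_bits g"
    using Yv[of i] Yv[of j] Yv[of n] ij by simp_all
  then have Yi: "\<forall>p\<in>{P<..<d}. Y i ! p = a ! p"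
    and Yj: "\<forall>p\<in>{split_coord b g j<..<d}. Y j ! p = c ! p"
    and Yn: "\<forall>p\<in>{..<split_coord b g j} - split_coord b g ` {..<n - 1}. Y n ! p = c ! p"
    by (auto simp: lower_bits_def upper_bits_def shared_bits_def)
  note M = fiber_split_coords[OF g]
  have Mij: "P < split_coord b g j"
    using split_coord_strict_mono[OF b gc ij] M(1) by simp
  show "vertex_image s j = c"
    unfolding s
  proof (rule vertex_image_eqI[OF b gc ij(2) ac(2) Yj _ _ Yn])
    show "split_coord b g j < d \<Longrightarrow> \<not> c ! split_coord b g j"
      using M(3) by (cases "j < n - 1") (auto simp: split_coord_def)
  qed (use M(2) in auto)
  show "vertex_image s i = a"
    unfolding s
  proof (rule vertex_image_eqI[OF b gc _ ac(1)])
    show "\<forall>p\<in>{split_coord b g i<..<d}. Y i ! p = a ! p"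
      using Yi M(1) by simp
    show "\<forall>u<i. a ! split_coord b g u"
    proof (intro allI impI)
      fix u assume "u < i"
      then have "split_coord b g u < P"
        using split_coord_strict_mono[OF b gc, of u i] ij M(1) by simp
      then show "a ! split_coord b g u"
        using ac(3) M(2)[of u] \<open>u < i\<close> ij by simp
    qed
    show "\<forall>p\<in>{..<split_coord b g i} - split_coord b g ` {..<n - 1}. Y n ! p = a ! p"
    proof
      fix p assume p: "p \<in> {..<split_coord b g i} - split_coord b g ` {..<n - 1}"
      then have "p < P" "Y n ! p = c ! p"
        using Yn Mij M(1) by auto
      with ac(3) show "Y n ! p = a ! p" by simp
    qed
  qed (use M(1) ac(4) ij in auto)
qed

lemma fiber_subset_samples: "fiber \<subseteq> samples"
proof -
  have "fiber_bits g \<subseteq> PiE {..<Suc n} (\<lambda>_. cube d)" for g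
    unfolding fiber_bits_def
    by (rule PiE_mono) (auto simp: lower_bits_def upper_bits_def shared_bits_def)
  then show ?thesis
    using fiber_choices_subset_choices b by (auto simp: fiber_def samples_def)
qed

lemma card_lower_bits: "card lower_bits = 2 ^ (P + 1)"
  unfolding lower_bits_def using P_less by (subst card_cube_agree_on) auto

lemma card_upper_bits: "card (upper_bits g) = 2 ^ min d (split_coord b g j + 1)"
  unfolding upper_bits_def by (subst card_cube_agree_on) auto

lemma card_shared_bits:
  assumes g: "g \<in> choices"
  shows "card (shared_bits g) = 2 ^ (d - (split_coord b g j - j))" and "j \<le> split_coord b g j"
proof -
  let ?M = "split_coord b g"
  have "?M k < ?M j \<longleftrightarrow> k < j" if "k < n - 1" for k
    using that split_coord_less_iff[OF b g, of k j] ij by simp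
  then have eq: "{..<?M j} - ?M ` {..<n - 1} = {..<?M j} - ?M ` {..<j}"
    using ij by fastforce
  have sub: "?M ` {..<j} \<subseteq> {..<?M j}"
    using split_coord_strict_mono[OF b g] ij by auto
  have "inj_on ?M {..<j}"
    using split_coord_inj[OF b g] ij by (auto simp: inj_on_def)
  then have cj: "card (?M ` {..<j}) = j"
    by (simp add: card_image)
  show "j \<le> ?M j"
    using card_mono[OF _ sub] cj by simp
  have "card ({..<?M j} - ?M ` {..<n - 1}) = ?M j - j"
    unfolding eq using card_Diff_subset[OF _ sub] cj by simp
  then show "card (shared_bits g) = 2 ^ (d - (?M j - j))"
    unfolding shared_bits_def using split_coord_le[OF b g, of j]
    by (subst card_cube_agree_on) auto
qed

lemma card_constrained: "card constrained = (if j < n - 1 then j else j - 1)"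
proof -
  have "constrained = (if j < n - 1 then {..j} - {i} else {..<n - 1} - {i})"
    using ij by (auto simp: constrained_def)
  then show ?thesis
    using ij i_less by (cases "j < n - 1") auto
qed

lemma card_fixed_bits:
  assumes g: "g \<in> choices"
  shows "card lower_bits * card (upper_bits g) * card (shared_bits g) = 2 ^ (P + d + 2 + card constrained)"
proof -
  have "j \<le> split_coord b g j"
    using card_shared_bits(2)[OF g] .
  moreover have "j < n - 1 \<Longrightarrow> split_coord b g j < d" "\<not> j < n - 1 \<Longrightarrow> split_coord b g j = d"
    using split_coord_less[OF b g] by (auto simp: split_coord_def)
  ultimately have "(P + 1) + min d (split_coord b g j + 1) + (d - (split_coord b g j - j))
      = P + d + 2 + card constrained"
    using ij by (cases "j < n - 1") (auto simp: card_constrained)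
  then show ?thesis
    unfolding card_lower_bits card_upper_bits card_shared_bits(1)[OF g] by (metis power_add)
qed

lemma card_fiber_bits:
  assumes g: "g \<in> choices"
  shows "card (fiber_bits g) = 2 ^ (P + d + 2 + card constrained) * (2 ^ d) ^ (n - 2)"
proof -
  let ?F = "\<lambda>v. if v = i then lower_bits else if v = j then upper_bits g
                else if v = n then shared_bits g else cube d"
  have "card (fiber_bits g) = (\<Prod>v<Suc n. card (?F v))"
    unfolding fiber_bits_def by (simp add: card_PiE)
  also have "\<dots> = card (?F i) * card (?F j) * card (?F n) * (\<Prod>v\<in>{..<Suc n} - {i, j, n}. card (?F v))"
    by (rule prod_remove_three) (use ij in auto)
  also have "(\<Prod>v\<in>{..<Suc n} - {i, j, n}. card (?F v)) = (2 ^ d) ^ card ({..<Suc n} - {i, j, n})"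
    by (simp add: card_cube)
  also have "card ({..<Suc n} - {i, j, n}) = n - 2"
    using ij by (subst card_Diff_subset) auto
  finally show ?thesis
    using card_fixed_bits[OF g] ij by simp
qed

lemma card_fiber:
  "card fiber
    = (\<Prod>k<n - 1. card (fiber_choices k)) * (2 ^ (P + d + 2 + card constrained) * (2 ^ d) ^ (n - 2))"
proof -
  have "finite (PiE {..<n - 1} fiber_choices)"
    by (rule finite_PiE) (auto simp: fiber_choices_def)
  moreover have "finite (fiber_bits g)" for g
    unfolding fiber_bits_def by (rule finite_PiE) (auto simp: lower_bits_def upper_bits_def shared_bits_def)
  ultimately have "card fiber = (\<Sum>g\<in>PiE {..<n - 1} fiber_choices. card (fiber_bits g))"
    by (simp add: fiber_def card_cartesian_product_singleton card_SigmaI)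
  also have "\<dots>
      = (\<Sum>g\<in>PiE {..<n - 1} fiber_choices. 2 ^ (P + d + 2 + card constrained) * (2 ^ d) ^ (n - 2))"
    using fiber_choices_subset_choices card_fiber_bits by (intro sum.cong) auto
  finally show ?thesis
    by (simp add: card_PiE)
qed

text \<open>A constrained choice keeps only about half of the K levels of its block; this is paid for
  by the shared bit at its split coordinate, which c leaves free.\<close>
lemma prod_card_fiber_choices_ge:
  fixes e :: real
  assumes e: "0 \<le> e" "e \<le> 1"
    and half: "\<And>k. k \<in> constrained \<Longrightarrow> (1 - e) * K \<le> 2 * real (card (fiber_choices k))"
  shows "((1 - e) * K) ^ (n - 2) \<le> real (\<Prod>k<n - 1. card (fiber_choices k)) * 2 ^ card constrained"
proof -
  define w where "w k = real (card (fiber_choices k)) * (if k \<in> constrained then 2 else 1)" for k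
  have "(\<Prod>k<n - 1. (if k \<in> constrained then 2 else 1 :: real)) = 2 ^ card ({..<n - 1} \<inter> constrained)"
    by (simp add: prod.If_cases)
  also have "{..<n - 1} \<inter> constrained = constrained"
    by (auto simp: constrained_def)
  finally have two: "(\<Prod>k<n - 1. (if k \<in> constrained then 2 else 1 :: real)) = 2 ^ card constrained" .
  have "real (\<Prod>k<n - 1. card (fiber_choices k)) * 2 ^ card constrained = (\<Prod>k<n - 1. w k)"
    unfolding w_def prod.distrib two by simp
  also have "\<dots> = w i * (\<Prod>k\<in>{..<n - 1} - {i}. w k)"
    using prod.remove[of "{..<n - 1}" i w] i_less by simp
  also have "w i = 1"
    by (simp add: w_def fiber_choices_def constrained_def)
  finally have eq: "real (\<Prod>k<n - 1. card (fiber_choices k)) * 2 ^ card constrained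
      = (\<Prod>k\<in>{..<n - 1} - {i}. w k)"
    by simp
  have "(\<Prod>k\<in>{..<n - 1} - {i}. (1 - e) * K) \<le> (\<Prod>k\<in>{..<n - 1} - {i}. w k)"
  proof (rule prod_mono)
    fix k assume k: "k \<in> {..<n - 1} - {i}"
    have nonneg: "0 \<le> (1 - e) * K"
      using e by simp
    show "0 \<le> (1 - e) * K \<and> (1 - e) * K \<le> w k"
    proof (cases "k \<le> j")
      case True
      then have "k \<in> constrained"
        using k by (simp add: constrained_def)
      then show ?thesis
        using half[of k] nonneg by (simp add: w_def)
    next
      case False
      then have "k \<notin> constrained" "card (fiber_choices k) = K"
        using ij by (auto simp: constrained_def fiber_choices_def)
      moreover have "(1 - e) * K \<le> 1 * real K"
        using e by (intro mult_right_mono) auto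
      ultimately show ?thesis
        using nonneg by (simp add: w_def)
    qed
  qed
  moreover have "(\<Prod>k\<in>{..<n - 1} - {i}. (1 - e) * K) = ((1 - e) * K) ^ (n - 2)"
    using i_less by (simp add: card_Diff_subset numeral_2_eq_2)
  ultimately show ?thesis
    using eq by simp
qed

lemma card_fiber_ge:
  fixes e :: real
  assumes e: "0 \<le> e" "e \<le> 1"
    and half: "\<And>k. k \<in> constrained \<Longrightarrow> (1 - e) * K \<le> 2 * real (card (fiber_choices k))"
  shows "(1 - e) ^ (n - 2) * real (card samples)
    \<le> real (card fiber) * (real NB * real K * 2 ^ (2 * d - P - 2))"
proof -
  define Pr where "Pr = real (\<Prod>k<n - 1. card (fiber_choices k))"
  define m where "m = n - 2"
  have n: "n = m + 2"
    using ij by (simp add: m_def)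
  have "P + 2 \<le> 2 * d"
    using P_less by simp
  then have "P + d + 2 + card constrained + (2 * d - P - 2) + d * (n - 2) = card constrained + d * Suc n"
    unfolding n by (simp add: algebra_simps)
  then have exps: "(2::real) ^ (P + d + 2 + card constrained) * 2 ^ (2 * d - P - 2) * (2 ^ d) ^ (n - 2)
      = 2 ^ card constrained * (2 ^ d) ^ Suc n"
    by (simp only: power_mult[symmetric] power_add[symmetric])
  have "real K ^ (n - 1) = real K * real K ^ (n - 2)"
    using n by simp
  then have "(1 - e) ^ (n - 2) * real (card samples)
      = (1 - e) ^ (n - 2) * (real NB * (real K * real K ^ (n - 2)) * (2 ^ d) ^ Suc n)"
    unfolding card_samples by simp
  also have "\<dots> = ((1 - e) * K) ^ (n - 2) * (real NB * real K * (2 ^ d) ^ Suc n)"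
    by (simp only: power_mult_distrib mult_ac)
  also have "\<dots> \<le> Pr * 2 ^ card constrained * (real NB * real K * (2 ^ d) ^ Suc n)"
    using prod_card_fiber_choices_ge[OF e half] by (intro mult_right_mono) (auto simp: Pr_def)
  also have "\<dots> = Pr * (2 ^ (P + d + 2 + card constrained) * 2 ^ (2 * d - P - 2) * (2 ^ d) ^ (n - 2))
      * (real NB * real K)"
    unfolding exps by (simp only: mult_ac)
  also have "\<dots> = real (card fiber) * (real NB * real K * 2 ^ (2 * d - P - 2))"
    unfolding card_fiber Pr_def by (simp only: of_nat_mult of_nat_power of_nat_numeral mult_ac)
  finally show ?thesis .
qed

lemma card_samples_mapping_vertices_ge:
  fixes e :: real
  assumes e: "0 \<le> e" "e \<le> 1"
    and bal: "\<And>k. k < n - 1 \<Longrightarrow> k \<noteq> i \<Longrightarrow> k \<le> j \<Longrightarrow> balanced e c (b + k)"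
  shows "(1 - e) ^ (n - 2) * real (card samples)
    \<le> real (card {s \<in> samples. vertex_image s i = a \<and> vertex_image s j = c})
      * (real NB * real K * 2 ^ (2 * d - P - 2))"
proof -
  have half: "(1 - e) * K \<le> 2 * real (card (fiber_choices k))" if "k \<in> constrained" for k
    using that sign_sum_le_imp_card_ge[OF bal[unfolded balanced_def]] ij
    by (cases "k < j") (auto simp: constrained_def fiber_choices_def)
  have "card fiber \<le> card {s \<in> samples. vertex_image s i = a \<and> vertex_image s j = c}"
    using fiber_subset_samples vertex_images_fiber finite_samples by (intro card_mono) auto
  then have "real (card fiber) * (real NB * real K * 2 ^ (2 * d - P - 2))
      \<le> real (card {s \<in> samples. vertex_image s i = a \<and> vertex_image s j = c})
        * (real NB * real K * 2 ^ (2 * d - P - 2))"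
    by (intro mult_right_mono) auto
  with card_fiber_ge[OF e half] show ?thesis
    by (rule order_trans)
qed

end

definition near_blocks :: "nat \<Rightarrow> nat set" where
  "near_blocks r = {\<beta>. \<beta> < card L div K \<and> \<beta> \<noteq> r div K \<and> \<beta> \<le> r div K + n \<and> r div K \<le> \<beta> + n}"

definition balanced_pair :: "real \<Rightarrow> nat \<Rightarrow> bool list set \<Rightarrow> bool" where
  "balanced_pair e r q \<longleftrightarrow> (\<forall>y\<in>q. y ! (levels ! r - 1) \<longrightarrow> (\<forall>\<beta>\<in>near_blocks r. balanced e y \<beta>))"

definition central :: "nat \<Rightarrow> bool" where
  "central r \<longleftrightarrow> n - 2 \<le> r div K \<and> r div K < NB"

lemma tau_eq: "1 \<le> l \<Longrightarrow> tau l d = 2 ^ (2 * d - (l - 1) - 2)"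
  by (simp add: tau_def)

text \<open>The level with index r is the (r mod K)-th level of block r div K, so an edge between
  vertices i < j can be mapped to a pair at that level by samples starting at block
  r div K - i.\<close>
lemma card_samples_mapping_at_level_ge:
  fixes e :: real
  assumes e: "0 \<le> e" "e \<le> 1" and ij: "i < j" "j < n"
    and r: "r < card L" "central r"
    and ac: "a \<in> cube d" "c \<in> cube d" "\<forall>p < levels ! r - 1. a ! p = c ! p"
      "\<not> a ! (levels ! r - 1)" "c ! (levels ! r - 1)"
    and bal: "\<forall>\<beta>\<in>near_blocks r. balanced e c \<beta>"
  shows "(1 - e) ^ (n - 2) * real (card samples)
    \<le> real (card {s \<in> samples. vertex_image s i = a \<and> vertex_image s j = c})
      * (real NB * real K * tau (levels ! r) d)"
proof -
  have i: "i \<le> r div K"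
    using ij r unfolding central_def by arith
  have "NB + n \<le> card L div K"
    using enough_levels K_pos by (simp add: less_eq_div_iff_mult_less_eq)
  then have "r div K - i + k \<in> near_blocks r" if "k < n - 1" "k \<noteq> i" "k \<le> j" for k
    using that i r(2) ij unfolding near_blocks_def central_def mem_Collect_eq by (intro conjI; arith)
  then have bal': "balanced e c (r div K - i + k)" if "k < n - 1" "k \<noteq> i" "k \<le> j" for k
    using bal that by blast
  have P: "coord (r div K - i + i) (r mod K) = levels ! r - 1"
    using i by (simp add: coord_def)
  have b: "r div K - i < NB"
    using r(2) by (simp add: central_def less_imp_diff_less)
  have "(1 - e) ^ (n - 2) * real (card samples)
      \<le> real (card {s \<in> samples. vertex_image s i = a \<and> vertex_image s j = c})
        * (real NB * real K * 2 ^ (2 * d - (levels ! r - 1) - 2))"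
    using card_samples_mapping_vertices_ge[OF b ij mod_less_divisor[OF K_pos] P ac e bal'] .
  then show ?thesis
    unfolding tau_eq[OF levels_bounds(1)[OF r(1)]] by simp
qed

lemma card_unbalanced_pairs_le:
  fixes e :: real
  assumes e: "e > 0" and r: "r < card L"
  shows "real (card {q \<in> pairs_at d (levels ! r). \<not> balanced_pair e r q})
    \<le> 2 * (2 * n + 1) / (e\<^sup>2 * K) * tau (levels ! r) d"
proof -
  define l where "l = levels ! r"
  have l: "1 \<le> l" "l \<le> d"
    using levels_bounds[OF r] by (auto simp: l_def)
  define unbalanced where "unbalanced \<beta> = {y \<in> cube d. e * K < \<bar>\<Sum>g<K. bit_sign (y ! coord \<beta> g)\<bar>}" for \<beta>
  have "{q \<in> pairs_at d l. \<not> balanced_pair e r q}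
      \<subseteq> (\<Union>\<beta>\<in>near_blocks r. {q \<in> pairs_at d l. \<exists>y\<in>q. y \<in> unbalanced \<beta>})"
  proof
    fix q assume "q \<in> {q \<in> pairs_at d l. \<not> balanced_pair e r q}"
    then obtain y \<beta> where q: "q \<in> pairs_at d l" "y \<in> q" "\<beta> \<in> near_blocks r" "\<not> balanced e y \<beta>"
      by (auto simp: balanced_pair_def l_def)
    moreover from q(1,2) have "y \<in> cube d"
      by (auto simp: pairs_at_def)
    ultimately show "q \<in> (\<Union>\<beta>\<in>near_blocks r. {q \<in> pairs_at d l. \<exists>y\<in>q. y \<in> unbalanced \<beta>})"
      by (auto simp: balanced_def unbalanced_def not_le)
  qed
  then have "card {q \<in> pairs_at d l. \<not> balanced_pair e r q}
      \<le> card (\<Union>\<beta>\<in>near_blocks r. {q \<in> pairs_at d l. \<exists>y\<in>q. y \<in> unbalanced \<beta>})"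
    by (rule card_mono[rotated]) (auto simp: near_blocks_def finite_pairs_at)
  also have "\<dots> \<le> (\<Sum>\<beta>\<in>near_blocks r. card {q \<in> pairs_at d l. \<exists>y\<in>q. y \<in> unbalanced \<beta>})"
    by (rule card_UN_le) (simp add: near_blocks_def)
  also have "\<dots> \<le> (\<Sum>\<beta>\<in>near_blocks r. card (unbalanced \<beta>) * 2 ^ (d - l))"
    using l by (intro sum_mono card_pairs_at_meeting_le) (auto simp: unbalanced_def)
  finally have "real (card {q \<in> pairs_at d l. \<not> balanced_pair e r q})
      \<le> real (\<Sum>\<beta>\<in>near_blocks r. card (unbalanced \<beta>) * 2 ^ (d - l))"
    by (rule of_nat_mono)
  also have "\<dots> = (\<Sum>\<beta>\<in>near_blocks r. real (card (unbalanced \<beta>)) * 2 ^ (d - l))"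
    by simp
  also have "\<dots> \<le> (\<Sum>\<beta>\<in>near_blocks r. real K * 2 ^ d / (e * K)\<^sup>2 * 2 ^ (d - l))"
  proof (intro sum_mono mult_right_mono)
    fix \<beta> assume "\<beta> \<in> near_blocks r"
    then have "\<beta> < card L div K"
      by (simp add: near_blocks_def)
    then show "real (card (unbalanced \<beta>)) \<le> real K * 2 ^ d / (e * K)\<^sup>2"
      unfolding unbalanced_def using e K_pos
      by (intro card_cube_unbalanced_le coord_inj_on coord_image_subset) auto
  qed simp
  also have "\<dots> = real (card (near_blocks r)) * (real K * 2 ^ d / (e * K)\<^sup>2 * 2 ^ (d - l))"
    by simp
  also have "\<dots> \<le> real (2 * n + 1) * (real K * 2 ^ d / (e * K)\<^sup>2 * 2 ^ (d - l))"
  proof (rule mult_right_mono)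
    have "card (near_blocks r) \<le> card {r div K - n .. r div K + n}"
      by (rule card_mono) (auto simp: near_blocks_def)
    then show "real (card (near_blocks r)) \<le> real (2 * n + 1)"
      by simp
  qed simp
  also have "\<dots> = real (2 * n + 1) * (2 ^ d * 2 ^ (d - l)) / (e\<^sup>2 * K)"
    using e K_pos by (simp add: power2_eq_square)
  also have "(2::real) ^ d * 2 ^ (d - l) = 2 * tau l d"
  proof -
    have "d + (d - l) = Suc (2 * d - l - 1)"
      using l by simp
    then show ?thesis
      by (simp add: tau_def flip: power_add)
  qed
  finally show ?thesis
    by (simp add: l_def algebra_simps)
qed

lemma card_noncentral_le: "card {r. r < card L \<and> \<not> central r} \<le> (n - 2) * K + (card L - NB * K)"
proof -
  have "{r. r < card L \<and> \<not> central r} \<subseteq> {..<(n - 2) * K} \<union> {NB * K..<card L}"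
    using K_pos by (auto simp: central_def less_eq_div_iff_mult_less_eq div_less_iff_less_mult)
  then have "card {r. r < card L \<and> \<not> central r} \<le> card ({..<(n - 2) * K} \<union> {NB * K..<card L})"
    by (intro card_mono) auto
  also have "\<dots> \<le> card {..<(n - 2) * K} + card {NB * K..<card L}"
    by (rule card_Un_le)
  finally show ?thesis by simp
qed

end

locale graph_level_blocks = level_blocks L d K NB "card V"
  for L :: "nat set" and d K NB :: nat and V :: "'a::linorder set" +
  fixes E :: "'a set set"
  assumes graph: "ordered_graph V E" and start_blocks: "0 < NB"
begin

definition embedding :: "sample \<Rightarrow> 'a \<Rightarrow> bool list" where
  "embedding s w = vertex_image s (vertex_index V w)"

definition random_embedding :: "('a \<Rightarrow> bool list) pmf" where
  "random_embedding = map_pmf embedding (pmf_of_set samples)"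

lemma finite_vertices: "finite V"
  using graph by (simp add: ordered_graph_def)

lemma embedding_lex_less:
  assumes "s \<in> samples" "u \<in> V" "w \<in> V" "u < w"
  shows "lex_less (embedding s u) (embedding s w)"
proof -
  obtain b g Y where "s = (b, g, Y)"
    by (cases s) auto
  moreover have "vertex_index V u < vertex_index V w" "vertex_index V w < card V"
    using assms finite_vertices by (auto simp: vertex_index_strict_mono vertex_index_less_card)
  ultimately show ?thesis
    using vertex_image_lex_less assms(1) by (simp add: embedding_def)
qed

lemma embedding_in_embeddings: "s \<in> samples \<Longrightarrow> embedding s \<in> embeddings V E d"
  using embedding_lex_less by (simp add: embeddings_def embedding_def vertex_image_in_cube)

lemma inj_on_embedding:
  assumes "s \<in> samples"
  shows "inj_on (embedding s) V"
proof (rule inj_onI, rule ccontr)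
  fix u w assume uw: "u \<in> V" "w \<in> V" "embedding s u = embedding s w" "u \<noteq> w"
  then have "u < w \<or> w < u"
    by auto
  then have "lex_less (embedding s u) (embedding s w) \<or> lex_less (embedding s w) (embedding s u)"
    using embedding_lex_less[OF assms] uw(1,2) by blast
  with uw(3) show False
    by (simp add: lex_less_def)
qed

lemma samples_nonempty: "samples \<noteq> {}"
proof -
  have "(0, (\<lambda>k\<in>{..<card V - 1}. 0), (\<lambda>v\<in>{..<Suc (card V)}. replicate d False)) \<in> samples"
    using start_blocks K_pos by (auto simp: samples_def choices_def cube_def)
  then show ?thesis by blast
qed

lemma set_pmf_random_embedding: "set_pmf random_embedding \<subseteq> embeddings V E d"
  using samples_nonempty finite_samples embedding_in_embeddings by (auto simp: random_embedding_def)

lemma prob_random_embedding: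
  "measure_pmf.prob random_embedding {\<phi>. p \<in> image_graph \<phi> E}
    = real (card {s \<in> samples. p \<in> image_graph (embedding s) E}) / real (card samples)"
proof -
  have "measure_pmf.prob random_embedding {\<phi>. p \<in> image_graph \<phi> E}
      = measure_pmf.prob (pmf_of_set samples) (embedding -` {\<phi>. p \<in> image_graph \<phi> E})"
    by (simp add: random_embedding_def)
  also have "\<dots> = real (card (samples \<inter> embedding -` {\<phi>. p \<in> image_graph \<phi> E})) / real (card samples)"
    using samples_nonempty finite_samples by (simp add: measure_pmf_of_set)
  also have "samples \<inter> embedding -` {\<phi>. p \<in> image_graph \<phi> E}
      = {s \<in> samples. p \<in> image_graph (embedding s) E}"
    by auto
  finally show ?thesis .
qed

text \<open>Different edges have disjoint sets of samples mapping them onto q, since each embedding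
  is injective; so the bounds of the single edges add up.\<close>
lemma card_samples_hitting_pair_ge:
  fixes e :: real
  assumes e: "0 \<le> e" "e \<le> 1" and r: "r < card L" "central r"
    and q: "q \<in> pairs_at d (levels ! r)" "balanced_pair e r q"
  shows "(1 - e) ^ (card V - 2) * real (card E) * real (card samples)
    \<le> real (card {s \<in> samples. q \<in> image_graph (embedding s) E}) * (real NB * real K * tau (levels ! r) d)"
proof -
  define l where "l = levels ! r"
  define T where "T = real NB * real K * tau l d"
  obtain x y where xy: "q = {x, y}" "x \<in> cube d" "y \<in> cube d" "x \<noteq> y" "delta x y = l"
    using q unfolding pairs_at_def l_def by blast
  have "x ! (l - 1) \<noteq> y ! (l - 1)" "\<forall>p<l - 1. x ! p = y ! p"
    using delta_first_difference[OF xy(2-4)] xy(5) by auto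
  then obtain a c where ac: "q = {a, c}" "a \<in> cube d" "c \<in> cube d" "\<forall>p<l - 1. a ! p = c ! p"
      "\<not> a ! (l - 1)" "c ! (l - 1)"
    using xy by (cases "x ! (l - 1)") (auto simp: insert_commute)
  have bal: "\<forall>\<beta>\<in>near_blocks r. balanced e c \<beta>"
    using q(2) ac by (auto simp: balanced_pair_def l_def)
  define hitting where "hitting f = {s \<in> samples. embedding s ` f = q}" for f
  have each: "(1 - e) ^ (card V - 2) * real (card samples) \<le> real (card (hitting f)) * T" if "f \<in> E" for f
  proof -
    obtain u w where uw: "f = {u, w}" "u \<in> V" "w \<in> V" "u < w"
      using ordered_graph_edgeE[OF graph \<open>f \<in> E\<close>] .
    have "vertex_index V u < vertex_index V w" "vertex_index V w < card V"
      using uw finite_vertices by (auto simp: vertex_index_strict_mono vertex_index_less_card)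
    then have "(1 - e) ^ (card V - 2) * real (card samples)
        \<le> real (card {s \<in> samples.
              vertex_image s (vertex_index V u) = a \<and> vertex_image s (vertex_index V w) = c}) * T"
      unfolding T_def l_def using ac bal by (intro card_samples_mapping_at_level_ge e r) (auto simp: l_def)
    also have "\<dots> \<le> real (card (hitting f)) * T"
      using uw ac(1) finite_samples
      by (intro mult_right_mono of_nat_mono card_mono) (auto simp: hitting_def embedding_def T_def)
    finally show ?thesis .
  qed
  have "(1 - e) ^ (card V - 2) * real (card E) * real (card samples)
      = (\<Sum>f\<in>E. (1 - e) ^ (card V - 2) * real (card samples))"
    by simp
  also have "\<dots> \<le> (\<Sum>f\<in>E. real (card (hitting f)) * T)"
    using each by (rule sum_mono)
  also have "\<dots> = real (card (\<Union>f\<in>E. hitting f)) * T"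
  proof -
    have same: "f = f'" if f: "f \<in> E" "f' \<in> E" and s: "s \<in> hitting f" "s \<in> hitting f'" for f f' s
    proof -
      have "f \<subseteq> V" "f' \<subseteq> V"
        using ordered_graph_edgeE[OF graph f(1)] ordered_graph_edgeE[OF graph f(2)] by blast+
      moreover have "s \<in> samples" "embedding s ` f = embedding s ` f'"
        using s by (auto simp: hitting_def)
      ultimately show "f = f'"
        using inj_on_image_eq_iff[OF inj_on_embedding] by blast
    qed
    have "\<forall>f\<in>E. \<forall>f'\<in>E. f \<noteq> f' \<longrightarrow> hitting f \<inter> hitting f' = {}"
    proof (intro ballI impI)
      fix f f' assume "f \<in> E" "f' \<in> E" "f \<noteq> f'"
      with same[OF \<open>f \<in> E\<close> \<open>f' \<in> E\<close>] show "hitting f \<inter> hitting f' = {}"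
        by blast
    qed
    moreover have "\<forall>f\<in>E. finite (hitting f)"
      using finite_samples by (simp add: hitting_def)
    ultimately have "card (\<Union>f\<in>E. hitting f) = (\<Sum>f\<in>E. card (hitting f))"
      using ordered_graph_finite_edges[OF graph] by (intro card_UN_disjoint) auto
    then show ?thesis
      by (simp add: sum_distrib_right)
  qed
  also have "(\<Union>f\<in>E. hitting f) = {s \<in> samples. q \<in> image_graph (embedding s) E}"
    by (auto simp: hitting_def image_graph_def)
  finally show ?thesis
    by (simp add: T_def l_def)
qed

lemma bad_pairs_subset_unbalanced:
  fixes e \<epsilon> :: real
  assumes e: "0 \<le> e" "e \<le> 1" "1 - \<epsilon> \<le> (1 - e) ^ (card V - 2)" and r: "r < card L" "central r"
  shows "bad_pairs random_embedding E d L \<epsilon> (levels ! r)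
    \<subseteq> {q \<in> pairs_at d (levels ! r). \<not> balanced_pair e r q}"
proof
  fix q assume bad: "q \<in> bad_pairs random_embedding E d L \<epsilon> (levels ! r)"
  show "q \<in> {q \<in> pairs_at d (levels ! r). \<not> balanced_pair e r q}"
  proof (rule ccontr)
    assume "q \<notin> {q \<in> pairs_at d (levels ! r). \<not> balanced_pair e r q}"
    with bad have q: "q \<in> pairs_at d (levels ! r)" "balanced_pair e r q"
      by (auto simp: bad_pairs_def)
    define hits where "hits = real (card {s \<in> samples. q \<in> image_graph (embedding s) E})"
    define T where "T = real (tau (levels ! r) d)"
    have "(1 - \<epsilon>) * real (card E) * real (card samples)
        \<le> (1 - e) ^ (card V - 2) * real (card E) * real (card samples)"
      using e by (intro mult_right_mono) auto
    also have "\<dots> \<le> hits * (real NB * real K * T)"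
      unfolding hits_def T_def by (rule card_samples_hitting_pair_ge[OF e(1,2) r q])
    also have "\<dots> \<le> hits * (real (card L) * T)"
    proof -
      have "NB * K \<le> card L"
        using enough_levels by (meson le_add1 mult_le_mono1 order_trans)
      then show ?thesis
        by (intro mult_left_mono mult_right_mono) (auto simp: hits_def T_def simp flip: of_nat_mult)
    qed
    finally have hits: "(1 - \<epsilon>) * real (card E) * real (card samples) \<le> hits * (real (card L) * T)" .
    have L0: "0 < card L"
      using r by simp
    have T0: "0 < T"
      by (simp add: T_def tau_def)
    have LT: "0 < real (card L) * T"
      using L0 T0 by simp
    have S: "0 < real (card samples)"
      using samples_nonempty finite_samples by (simp add: card_gt_0_iff)
    have "(1 - \<epsilon>) * real (card E) / (real (card L) * T)
        = (1 - \<epsilon>) * real (card E) * real (card samples) / (real (card L) * T) / real (card samples)"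
      using S by simp
    also have "\<dots> \<le> hits * (real (card L) * T) / (real (card L) * T) / real (card samples)"
      using hits LT S by (intro divide_right_mono) auto
    also have "\<dots> = hits / real (card samples)"
      using L0 T0 by simp
    finally have "(1 - \<epsilon>) * real (card E) / (real (card L) * T) \<le> hits / real (card samples)" .
    with bad show False
      by (simp add: bad_pairs_def prob_random_embedding hits_def T_def)
  qed
qed

lemma card_bad_levels_le:
  fixes e \<epsilon> :: real
  assumes e: "0 < e" "e \<le> 1" "1 - \<epsilon> \<le> (1 - e) ^ (card V - 2)"
    and K_large: "2 * (2 * card V + 1) \<le> \<epsilon> * e\<^sup>2 * K"
  shows "card (bad_levels random_embedding E d L \<epsilon>) \<le> (card V - 2) * K + (card L - NB * K)"
proof -
  have "bad_levels random_embedding E d L \<epsilon> \<subseteq> (\<lambda>r. levels ! r) ` {r. r < card L \<and> \<not> central r}"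
  proof
    fix l assume l: "l \<in> bad_levels random_embedding E d L \<epsilon>"
    then have "l \<in> set levels"
      using finite_levels by (simp add: bad_levels_def levels_def)
    then obtain r where r: "r < card L" "l = levels ! r"
      using length_levels by (metis in_set_conv_nth)
    have "\<not> central r"
    proof
      assume "central r"
      then have "real (card (bad_pairs random_embedding E d L \<epsilon> l))
          \<le> real (card {q \<in> pairs_at d l. \<not> balanced_pair e r q})"
        using bad_pairs_subset_unbalanced[of e \<epsilon> r] e r finite_pairs_at
        by (intro of_nat_mono card_mono) auto
      also have "\<dots> \<le> 2 * (2 * card V + 1) / (e\<^sup>2 * K) * tau l d"
        using card_unbalanced_pairs_le[OF e(1) r(1)] r by simp
      also have "\<dots> \<le> \<epsilon> * tau l d"
        using K_large e K_pos by (intro mult_right_mono) (auto simp: field_simps)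
      finally show False
        using l by (simp add: bad_levels_def)
    qed
    with r show "l \<in> (\<lambda>r. levels ! r) ` {r. r < card L \<and> \<not> central r}"
      by blast
  qed
  then have "card (bad_levels random_embedding E d L \<epsilon>)
      \<le> card ((\<lambda>r. levels ! r) ` {r. r < card L \<and> \<not> central r})"
    by (intro card_mono finite_imageI) auto
  also have "\<dots> \<le> card {r. r < card L \<and> \<not> central r}"
    by (rule card_image_le) auto
  also have "\<dots> \<le> (card V - 2) * K + (card L - NB * K)"
    by (rule card_noncentral_le)
  finally show ?thesis .
qed

end

section \<open>Choice of the parameters\<close>

lemma one_minus_le_power:
  fixes e \<epsilon> :: real
  assumes "0 \<le> e" "e \<le> 1" "real m * e \<le> \<epsilon>"
  shows "1 - \<epsilon> \<le> (1 - e) ^ m"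
proof -
  have "1 + real m * (- e) \<le> (1 + (- e)) ^ m"
    using assms by (intro Bernoulli_inequality) simp
  with assms(3) show ?thesis by simp
qed

lemma exists_block_size:
  fixes \<epsilon> :: real and n :: nat
  assumes "0 < \<epsilon>"
  obtains e :: real and K :: nat
  where "0 < e" "e \<le> 1" "1 - \<epsilon> \<le> (1 - e) ^ (n - 2)"
    and "0 < K" "real (2 * (2 * n + 1)) \<le> \<epsilon> * e\<^sup>2 * K"
proof -
  define e where "e = min 1 \<epsilon> / (n + 1)"
  define K where "K = nat \<lceil>2 * (2 * n + 1) / (\<epsilon> * e\<^sup>2)\<rceil> + 1"
  have e: "0 < e" "e \<le> 1"
    using assms by (auto simp: e_def field_simps)
  have "real (n - 2) * e \<le> (n + 1) * e"
    using e by (intro mult_right_mono) auto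
  also have "\<dots> \<le> \<epsilon>"
    by (simp add: e_def)
  finally have "1 - \<epsilon> \<le> (1 - e) ^ (n - 2)"
    using e by (intro one_minus_le_power) auto
  moreover have "2 * (2 * n + 1) / (\<epsilon> * e\<^sup>2) \<le> real K"
    unfolding K_def by linarith
  then have "real (2 * (2 * n + 1)) \<le> \<epsilon> * e\<^sup>2 * K"
    using assms e by (simp add: field_simps)
  ultimately show thesis
    using that[of e K] e by (simp add: K_def)
qed

lemma exists_random_embedding:
  fixes e \<epsilon> :: real
  assumes graph: "ordered_graph V E"
    and e: "0 < e" "e \<le> 1" "1 - \<epsilon> \<le> (1 - e) ^ (card V - 2)"
    and K: "0 < K" "real (2 * (2 * card V + 1)) \<le> \<epsilon> * e\<^sup>2 * K"
    and L: "L \<subseteq> {1..d}" "(2 * card V + 2) * K \<le> card L" "real ((2 * card V + 2) * K) \<le> \<epsilon> * card L"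
  shows "\<exists>\<Phi>. set_pmf \<Phi> \<subseteq> embeddings V E d \<and> real (card (bad_levels \<Phi> E d L \<epsilon>)) \<le> \<epsilon> * card L"
proof -
  define NB where "NB = card L div K - card V"
  have blocks: "2 * card V + 2 \<le> card L div K"
    using L(2) K(1) by (simp add: less_eq_div_iff_mult_less_eq)
  then have NB: "NB + card V = card L div K" "0 < NB"
    by (auto simp: NB_def)
  then have "card L < (NB + card V + 1) * K"
    using div_less_iff_less_mult[OF K(1), of "card L" "card L div K + 1"] by simp
  interpret graph_level_blocks L d K NB V E
    using L(1) K(1) graph NB by unfold_locales (auto simp: less_eq_div_iff_mult_less_eq)
  have "card (bad_levels random_embedding E d L \<epsilon>) \<le> (card V - 2) * K + (card L - NB * K)"
    using e K(2) by (rule card_bad_levels_le)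
  also have "\<dots> \<le> (2 * card V + 2) * K"
    using \<open>card L < (NB + card V + 1) * K\<close> by (simp add: algebra_simps)
  finally have "real (card (bad_levels random_embedding E d L \<epsilon>)) \<le> real ((2 * card V + 2) * K)"
    by (rule of_nat_mono)
  also have "\<dots> \<le> \<epsilon> * card L"
    by (rule L(3))
  finally show ?thesis
    using set_pmf_random_embedding by blast
qed

theorem lemma3p2:
  fixes V :: "'a::linorder set" and E :: "'a set set" and \<epsilon> :: real
  assumes "ordered_graph V E" and "\<epsilon> > 0"
  shows "\<exists>C::nat. \<forall>(d::nat) (L::nat set). L \<subseteq> {1..d} \<and> card L \<ge> C \<longrightarrow>
    (\<exists>\<Phi> :: ('a \<Rightarrow> bool list) pmf. set_pmf \<Phi> \<subseteq> embeddings V E d \<and>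
      real (card {l \<in> L. real (card {p \<in> pairs_at d l.
            \<not> (measure_pmf.prob \<Phi> {\<phi>. p \<in> image_graph \<phi> E}
                 \<ge> (1 - \<epsilon>) * real (card E) / (real (card L) * real (tau l d)))})
          > \<epsilon> * real (tau l d)})
        \<le> \<epsilon> * real (card L))"
proof -
  obtain e and K :: nat where e: "0 < e" "e \<le> 1" "1 - \<epsilon> \<le> (1 - e) ^ (card V - 2)"
    and K: "0 < K" "real (2 * (2 * card V + 1)) \<le> \<epsilon> * e\<^sup>2 * K"
    using exists_block_size[where n = "card V", OF \<open>\<epsilon> > 0\<close>] .
  define M where "M = (2 * card V + 2) * K"
  \<comment> \<open>Dividing by min 1 \<epsilon> rather than \<epsilon> also gives |L| \<ge> M when \<epsilon> > 1.\<close>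
  show ?thesis
  proof (intro exI[of _ "nat \<lceil>M / min 1 \<epsilon>\<rceil>"] allI impI)
    fix d :: nat and L :: "nat set"
    assume dL: "L \<subseteq> {1..d} \<and> nat \<lceil>M / min 1 \<epsilon>\<rceil> \<le> card L"
    then have "M / min 1 \<epsilon> \<le> card L"
      by (simp add: nat_le_iff ceiling_le_iff)
    then have M: "M \<le> min 1 \<epsilon> * card L"
      using \<open>\<epsilon> > 0\<close> by (simp add: pos_divide_le_eq mult.commute)
    have "real M \<le> card L" "real M \<le> \<epsilon> * card L"
      using order_trans[OF M mult_right_mono[OF min.cobounded1]]
        order_trans[OF M mult_right_mono[OF min.cobounded2]] by simp_all
    then have "\<exists>\<Phi>. set_pmf \<Phi> \<subseteq> embeddings V E d \<and> real (card (bad_levels \<Phi> E d L \<epsilon>)) \<le> \<epsilon> * card L"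
      using exists_random_embedding[OF assms(1) e K] dL unfolding M_def of_nat_le_iff by blast
    then show "\<exists>\<Phi>. set_pmf \<Phi> \<subseteq> embeddings V E d \<and> real (card {l \<in> L. real (card {p \<in> pairs_at d l.
            \<not> (measure_pmf.prob \<Phi> {\<phi>. p \<in> image_graph \<phi> E}
                 \<ge> (1 - \<epsilon>) * real (card E) / (real (card L) * real (tau l d)))}) > \<epsilon> * real (tau l d)})
        \<le> \<epsilon> * real (card L)"
      by (simp only: bad_levels_def bad_pairs_def)
  qed
qed

end
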